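(* Let $G=(V,R,E)$ be a finite bipartite version–record graph whose version graph $\mathbb{G}$ is a DAG (possibly with merges), and let $0<\delta\le1$. Let $\hat{\mathbb{T}}$ be the version tree obtained from $\mathbb{G}$ by keeping, for each version with several incoming edges, only one incoming edge of maximum weight, and let $\hat{G}$ and $\hat R$ be as defined below. Applying LyreSplit with parameter $\delta$ to $\hat{\mathbb{T}}$ (with bipartite graph $\hat{G}$) yields a partition of $V$ whose storage cost is at most $\frac{|R|+|\hat R|}{|R|}(1+\delta)^{\ell}\cdot|R|$ and whose average checkout cost is at most $\frac1\delta\cdot\frac{|E|}{|V|}$; i.e., it is a $\left(\frac{|R|+|\hat R|}{|R|}(1+\delta)^{\ell},\frac1\delta\right)$-approximation, where $\ell$ is the recursion level at which LyreSplit terminates.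
   Context: $(v,r)\in E$ means version $v$ contains record $r$; $R(v)=\{r:(v,r)\in E\}$, $R=\bigcup_vR(v)$. The version graph $\mathbb{G}=(V,\mathbb{E})$ is a DAG whose edges go from a parent version to a derived child version, with weights $w(v_i,v_j)=|R(v_i)\cap R(v_j)|$; every non-root version has at least one parent. $\hat{G}=(V,R\cup\hat R,\hat E)$ is the bipartite graph corresponding to $\hat{\mathbb{T}}$: for a merged version $v_k$, records of $v_k$ not inherited from its retained parent are treated as newly created records in $\hat{\mathbb{T}}$ (even if equal to records of another parent); $\hat R$ is the set of these additional duplicated records, so $\hat G$ has $|R|+|\hat R|$ records and $|\hat E|=|E|$ edges, and each record's set of containing versions is a connected subtree of $\hat{\mathbb{T}}$. LyreSplit on a subtree of $\hat{\mathbb T}$ with version set $V'$, record set $R'$ (records of $\hat G$ in versions of $V'$) and edge count $|E'|$: if $|R'||V'|<|E'|/\delta$ return $V'$ as one block; otherwise remove any tree edge $e$ of the subtree with $w(e)\le\delta|R'|$ (weights computed in $\hat G$) and recurse on the two resulting subtrees. The initial call is at recursion level $0$; $\ell$ is the largest level reached. The storage cost of a partition $\mathcal{V}_1,\dots,\mathcal{V}_K$ is $\sum_k|\mathcal{R}_k|$ and the average checkout cost is $\frac1{|V|}\sum_k|\mathcal{V}_k||\mathcal{R}_k|$, where $\mathcal{R}_k$ is the set of records contained in versions of $\mathcal{V}_k$. An $(X,Y)$-approximation has storage cost at most $X|R|$ and average checkout cost at most $Y\frac{|E|}{|V|}$. *)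

theory Defs
  imports Complex_Main
begin

definition Rv :: "('v \<times> 'r) set \<Rightarrow> 'v \<Rightarrow> 'r set" where
  "Rv E v = {r. (v, r) \<in> E}"

definition wt :: "('v \<times> 'r) set \<Rightarrow> 'v \<Rightarrow> 'v \<Rightarrow> nat" where
  "wt E u v = card (Rv E u \<inter> Rv E v)"

text \<open>The tree \<open>\<hat>T\<close> is given by a parent function par (root v0).  In \<open>\<hat>G\<close> the copy of
  record r seen at version v is identified by the version where it was (re)created:
  walk up the retained-parent chain while the retained parent still contains r.\<close>
definition origin :: "('v \<times> 'r) set \<Rightarrow> ('v \<Rightarrow> 'v) \<Rightarrow> 'v \<Rightarrow> 'v \<Rightarrow> 'r \<Rightarrow> 'v" where
  "origin E par v0 v r =
     (par ^^ (LEAST n. (par ^^ n) v = v0 \<or> r \<notin> Rv E (par ((par ^^ n) v)))) v"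

definition hatRv :: "('v \<times> 'r) set \<Rightarrow> ('v \<Rightarrow> 'v) \<Rightarrow> 'v \<Rightarrow> 'v \<Rightarrow> ('r \<times> 'v) set" where
  "hatRv E par v0 v = (\<lambda>r. (r, origin E par v0 v r)) ` Rv E v"

definition hatRset :: "('v \<times> 'r) set \<Rightarrow> ('v \<Rightarrow> 'v) \<Rightarrow> 'v \<Rightarrow> 'v set \<Rightarrow> ('r \<times> 'v) set" where
  "hatRset E par v0 Vs = (\<Union>v\<in>Vs. hatRv E par v0 v)"

definition card_hatR :: "('v \<times> 'r) set \<Rightarrow> ('v \<Rightarrow> 'v) \<Rightarrow> 'v \<Rightarrow> 'v set \<Rightarrow> nat" where
  "card_hatR E par v0 V = card (hatRset E par v0 V) - card (snd ` E)"

text \<open>Number of bipartite edges incident to versions in Vs (same in G and \<open>\<hat>G\<close>).\<close>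
definition edges_in :: "('v \<times> 'r) set \<Rightarrow> 'v set \<Rightarrow> nat" where
  "edges_in E Vs = card {e \<in> E. fst e \<in> Vs}"

definition subtree_below :: "('v \<Rightarrow> 'v) \<Rightarrow> 'v \<Rightarrow> 'v set \<Rightarrow> 'v set" where
  "subtree_below par c Vs = {u \<in> Vs. \<exists>n. (par ^^ n) u = c}"

text \<open>LyreSplit (nondeterministic in the choice of the edge to remove).
  lyresplit \<delta> E par v0 Vs k P L: a call on the subtree with version set Vs at recursion
  level k may return the blocks P, with L the largest recursion level reached.\<close>
inductive lyresplit :: "real \<Rightarrow> ('v \<times> 'r) set \<Rightarrow> ('v \<Rightarrow> 'v) \<Rightarrow> 'v \<Rightarrow>
    'v set \<Rightarrow> nat \<Rightarrow> 'v set set \<Rightarrow> nat \<Rightarrow> bool"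
  for \<delta> E par v0 where
  leaf: "real (card (hatRset E par v0 Vs)) * real (card Vs) < real (edges_in E Vs) / \<delta>
         \<Longrightarrow> lyresplit \<delta> E par v0 Vs k {Vs} k"
| split: "\<not> (real (card (hatRset E par v0 Vs)) * real (card Vs) < real (edges_in E Vs) / \<delta>)
         \<Longrightarrow> c \<in> Vs \<Longrightarrow> c \<noteq> v0 \<Longrightarrow> par c \<in> Vs
         \<Longrightarrow> real (card (hatRv E par v0 (par c) \<inter> hatRv E par v0 c))
               \<le> \<delta> * real (card (hatRset E par v0 Vs))
         \<Longrightarrow> lyresplit \<delta> E par v0 (subtree_below par c Vs) (Suc k) P1 L1
         \<Longrightarrow> lyresplit \<delta> E par v0 (Vs - subtree_below par c Vs) (Suc k) P2 L2
         \<Longrightarrow> lyresplit \<delta> E par v0 Vs k (P1 \<union> P2) (max L1 L2)"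

definition block_recs :: "('v \<times> 'r) set \<Rightarrow> 'v set \<Rightarrow> 'r set" where
  "block_recs E B = (\<Union>v\<in>B. Rv E v)"

definition storage_cost :: "('v \<times> 'r) set \<Rightarrow> 'v set set \<Rightarrow> nat" where
  "storage_cost E P = (\<Sum>B\<in>P. card (block_recs E B))"

definition avg_checkout_cost :: "('v \<times> 'r) set \<Rightarrow> 'v set \<Rightarrow> 'v set set \<Rightarrow> real" where
  "avg_checkout_cost E V P =
     (\<Sum>B\<in>P. real (card B) * real (card (block_recs E B))) / real (card V)"

end

theory Submission
  imports Defs
begin

text \<open>Every block B of the final partition is a leaf of the recursion, so
  |B| |R(B)| \<le> |B| |\<hat>R(B)| < (edges of B) / \<delta>; summing over the blocks bounds the
  checkout cost.  For storage, the records of \<hat>G form connected subtrees of \<hat>T, so a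
  record shared by the two sides of a removed edge (p, c) lies in both p and c.  Hence
  a split at a node with record set \<hat>R' produces two parts whose record counts add up to
  at most |\<hat>R'| + w(p, c) \<le> (1 + \<delta>) |\<hat>R'|, and after \<ell> levels the total is at most
  (1 + \<delta>)^\<ell> (|R| + |\<hat>R|).\<close>

lemma funpow_reaches_root:
  assumes "wf G" and "\<forall>v\<in>V. v \<noteq> v0 \<longrightarrow> par v \<in> V \<and> (par v, v) \<in> G" and "v \<in> V"
  shows "\<exists>n. (par ^^ n) v = v0"
  using assms(3)
proof (induction v rule: wf_induct_rule[OF assms(1)])
  case (1 v)
  show ?case
  proof (cases "v = v0")
    case True
    then show ?thesis by (metis funpow_0)
  next
    case False
    then obtain n where "(par ^^ n) (par v) = v0" using 1 assms(2) by blast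
    then have "(par ^^ Suc n) v = v0" by (metis comp_apply funpow_Suc_right)
    then show ?thesis by blast
  qed
qed

definition origin_dist :: "('v \<times> 'r) set \<Rightarrow> ('v \<Rightarrow> 'v) \<Rightarrow> 'v \<Rightarrow> 'v \<Rightarrow> 'r \<Rightarrow> nat" where
  "origin_dist E par v0 v r = (LEAST n. (par ^^ n) v = v0 \<or> r \<notin> Rv E (par ((par ^^ n) v)))"

lemma origin_eq_funpow_origin_dist:
  "origin E par v0 v r = (par ^^ origin_dist E par v0 v r) v"
  unfolding origin_def origin_dist_def ..

lemma origin_dist_funpow:
  assumes "(par ^^ n) v = v0" and "j \<le> origin_dist E par v0 v r"
  shows "origin_dist E par v0 ((par ^^ j) v) r = origin_dist E par v0 v r - j"
proof -
  define Q where "Q i \<longleftrightarrow> (par ^^ i) v = v0 \<or> r \<notin> Rv E (par ((par ^^ i) v))" for i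
  define d where "d = (LEAST i. Q i)"
  have dist: "origin_dist E par v0 v r = d"
    unfolding origin_dist_def d_def Q_def ..
  have "Q n" unfolding Q_def using assms(1) by blast
  then have "Q d" unfolding d_def by (rule LeastI)
  have "origin_dist E par v0 ((par ^^ j) v) r = (LEAST i. Q (i + j))"
    unfolding origin_dist_def Q_def by (simp add: funpow_add)
  also have "\<dots> = d - j"
  proof (rule Least_equality)
    show "Q (d - j + j)" using \<open>Q d\<close> assms(2) dist by simp
  next
    fix i assume "Q (i + j)"
    then have "\<not> i + j < d" unfolding d_def by (rule leD[OF Least_le])
    then show "d - j \<le> i" by simp
  qed
  finally show ?thesis using dist by simp
qed

lemma mem_Rv_funpow:
  assumes "r \<in> Rv E v" and "j \<le> origin_dist E par v0 v r"
  shows "r \<in> Rv E ((par ^^ j) v)"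
proof (cases j)
  case 0
  then show ?thesis using assms(1) by simp
next
  case (Suc i)
  then have "i < origin_dist E par v0 v r" using assms(2) by simp
  then have "r \<in> Rv E (par ((par ^^ i) v))"
    unfolding origin_dist_def using not_less_Least by blast
  then show ?thesis using Suc by simp
qed

lemma mem_hatRv_funpow:
  assumes "(par ^^ n) v = v0" and "r \<in> Rv E v" and "j \<le> origin_dist E par v0 v r"
  shows "(r, origin E par v0 v r) \<in> hatRv E par v0 ((par ^^ j) v)"
proof -
  let ?d = "origin_dist E par v0 v r"
  have "origin E par v0 ((par ^^ j) v) r = (par ^^ (?d - j)) ((par ^^ j) v)"
    by (simp add: origin_eq_funpow_origin_dist origin_dist_funpow[OF assms(1,3)])
  also have "\<dots> = (par ^^ (?d - j + j)) v" by (simp add: funpow_add)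
  also have "\<dots> = origin E par v0 v r" using assms(3) by (simp add: origin_eq_funpow_origin_dist)
  finally have "origin E par v0 ((par ^^ j) v) r = origin E par v0 v r" .
  then show ?thesis
    unfolding hatRv_def using mem_Rv_funpow[OF assms(2,3)] by force
qed

lemma finite_Rv: "finite E \<Longrightarrow> finite (Rv E v)"
  unfolding Rv_def by (rule finite_subset[of _ "snd ` E"]) force+

lemma finite_hatRv: "finite E \<Longrightarrow> finite (hatRv E par v0 v)"
  unfolding hatRv_def by (simp add: finite_Rv)

lemma finite_hatRset: "finite E \<Longrightarrow> finite Vs \<Longrightarrow> finite (hatRset E par v0 Vs)"
  unfolding hatRset_def by (simp add: finite_hatRv)

lemma fst_hatRset: "fst ` hatRset E par v0 B = block_recs E B"
  unfolding hatRset_def hatRv_def block_recs_def by (simp add: image_UN image_image)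

lemma card_block_recs_le_card_hatRset:
  "finite E \<Longrightarrow> finite B \<Longrightarrow> card (block_recs E B) \<le> card (hatRset E par v0 B)"
  by (metis card_image_le finite_hatRset fst_hatRset)

lemma block_recs_eq_snd_image: "fst ` E \<subseteq> V \<Longrightarrow> block_recs E V = snd ` E"
  unfolding block_recs_def Rv_def by force

lemma hatRset_shared_by_subtree_and_rest:
  assumes reach: "\<forall>v\<in>Vs. \<exists>n. (par ^^ n) v = v0"
    and x: "x \<in> hatRset E par v0 (subtree_below par c Vs)"
      "x \<in> hatRset E par v0 (Vs - subtree_below par c Vs)"
  shows "x \<in> hatRv E par v0 (par c) \<inter> hatRv E par v0 c"
proof -
  let ?S = "subtree_below par c Vs"
  obtain u r where u: "u \<in> ?S" and r: "r \<in> Rv E u" and xu: "x = (r, origin E par v0 u r)"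
    using x(1) unfolding hatRset_def hatRv_def by blast
  obtain u' where u': "u' \<in> Vs - ?S" and xu': "x = (r, origin E par v0 u' r)"
    using x(2) xu unfolding hatRset_def hatRv_def by blast
  obtain n where n: "(par ^^ n) u = c" and "u \<in> Vs"
    using u unfolding subtree_below_def by blast
  then obtain m where m: "(par ^^ m) u = v0" using reach by blast
  \<comment> \<open>u' lies outside the subtree of c but shares the origin of the copy with u,
    so this origin is a proper ancestor of c and the copy passes through c and par c.\<close>
  have "n < origin_dist E par v0 u r"
  proof (rule ccontr)
    assume "\<not> ?thesis"
    then have "n = (n - origin_dist E par v0 u r) + origin_dist E par v0 u r" by simp
    then have "(par ^^ (n - origin_dist E par v0 u r)) (origin E par v0 u r) = c"
      using n unfolding origin_eq_funpow_origin_dist by (metis comp_apply funpow_add)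
    then have "(par ^^ (n - origin_dist E par v0 u r + origin_dist E par v0 u' r)) u' = c"
      using xu xu' by (simp add: origin_eq_funpow_origin_dist funpow_add)
    then have "u' \<in> ?S" using u' unfolding subtree_below_def by blast
    then show False using u' by blast
  qed
  then have "x \<in> hatRv E par v0 ((par ^^ n) u)" and "x \<in> hatRv E par v0 ((par ^^ Suc n) u)"
    using mem_hatRv_funpow[OF m r, of n] mem_hatRv_funpow[OF m r, of "Suc n"] xu by simp_all
  then show ?thesis using n by simp
qed

lemma card_hatRset_subtree_split:
  assumes "finite E" and "finite Vs" and "\<forall>v\<in>Vs. \<exists>n. (par ^^ n) v = v0"
  shows "card (hatRset E par v0 (subtree_below par c Vs))
           + card (hatRset E par v0 (Vs - subtree_below par c Vs))
         \<le> card (hatRset E par v0 Vs) + card (hatRv E par v0 (par c) \<inter> hatRv E par v0 c)"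
proof -
  let ?S = "subtree_below par c Vs"
  have "?S \<subseteq> Vs" unfolding subtree_below_def by blast
  then have "hatRset E par v0 Vs = hatRset E par v0 ?S \<union> hatRset E par v0 (Vs - ?S)"
    unfolding hatRset_def by blast
  moreover have "hatRset E par v0 ?S \<inter> hatRset E par v0 (Vs - ?S)
      \<subseteq> hatRv E par v0 (par c) \<inter> hatRv E par v0 c"
    using hatRset_shared_by_subtree_and_rest[OF assms(3), where E = E and c = c] by blast
  then have "card (hatRset E par v0 ?S \<inter> hatRset E par v0 (Vs - ?S))
      \<le> card (hatRv E par v0 (par c) \<inter> hatRv E par v0 c)"
    by (intro card_mono) (simp_all add: assms(1) finite_hatRv)
  moreover have "finite ?S" using \<open>?S \<subseteq> Vs\<close> assms(2) by (rule finite_subset)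
  then have "finite (hatRset E par v0 ?S)" and "finite (hatRset E par v0 (Vs - ?S))"
    using assms(1,2) by (simp_all add: finite_hatRset)
  ultimately show ?thesis
    using card_Un_Int[of "hatRset E par v0 ?S" "hatRset E par v0 (Vs - ?S)"] by simp
qed

lemma lyresplit_partition:
  assumes "lyresplit \<delta> E par v0 Vs k P L"
  shows "finite P \<and> \<Union>P = Vs \<and> (\<forall>B\<in>P. B \<noteq> {}) \<and> pairwise disjnt P \<and> k \<le> L"
  using assms
proof (induction rule: lyresplit.induct)
  case (leaf Vs k)
  then have "Vs \<noteq> {}" unfolding edges_in_def hatRset_def by auto
  then show ?case by simp
next
  case (split Vs c k P1 L1 P2 L2)
  let ?S = "subtree_below par c Vs"
  have "\<Union>P1 = ?S" and "\<Union>P2 = Vs - ?S" and "?S \<subseteq> Vs"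
    using split.IH unfolding subtree_below_def by auto
  then have "disjnt B1 B2" if "B1 \<in> P1" and "B2 \<in> P2" for B1 B2
    using that unfolding disjnt_def by blast
  then have "pairwise disjnt (P1 \<union> P2)"
    using split.IH unfolding pairwise_def by (metis Un_iff disjnt_sym)
  then show ?case using split.IH \<open>\<Union>P1 = ?S\<close> \<open>\<Union>P2 = Vs - ?S\<close> \<open>?S \<subseteq> Vs\<close> by auto
qed

lemma lyresplit_split_parts_disjoint:
  assumes "lyresplit \<delta> E par v0 (subtree_below par c Vs) k P1 L1"
    and "lyresplit \<delta> E par v0 (Vs - subtree_below par c Vs) k P2 L2"
  shows "P1 \<inter> P2 = {}" and "finite P1" and "finite P2"
proof -
  have "\<Union>P1 \<inter> \<Union>P2 = {}" and "\<forall>B\<in>P1. B \<noteq> {}"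
    using lyresplit_partition[OF assms(1)] lyresplit_partition[OF assms(2)] by auto
  then show "P1 \<inter> P2 = {}" by blast
  show "finite P1" and "finite P2"
    using lyresplit_partition[OF assms(1)] lyresplit_partition[OF assms(2)] by simp_all
qed

lemma lyresplit_checkout_bound:
  assumes "lyresplit \<delta> E par v0 Vs k P L" and "finite E" and "finite Vs"
  shows "(\<Sum>B\<in>P. real (card B) * real (card (block_recs E B))) \<le> real (edges_in E Vs) / \<delta>"
  using assms(1,3)
proof (induction rule: lyresplit.induct)
  case (leaf Vs k)
  have "real (card Vs) * real (card (block_recs E Vs))
      \<le> real (card Vs) * real (card (hatRset E par v0 Vs))"
    using card_block_recs_le_card_hatRset[OF assms(2) leaf(2)] by (simp add: mult_left_mono)
  then show ?case using leaf(1) by (simp add: mult.commute)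
next
  case (split Vs c k P1 L1 P2 L2)
  let ?S = "subtree_below par c Vs" and ?g = "\<lambda>B. real (card B) * real (card (block_recs E B))"
  have "?S \<subseteq> Vs" unfolding subtree_below_def by blast
  then have "finite ?S" using split.prems by (rule finite_subset)
  then have "sum ?g P1 \<le> real (edges_in E ?S) / \<delta>" and "sum ?g P2 \<le> real (edges_in E (Vs - ?S)) / \<delta>"
    using split.IH split.prems by simp_all
  moreover have "edges_in E Vs = edges_in E ?S + edges_in E (Vs - ?S)"
    unfolding edges_in_def using \<open>?S \<subseteq> Vs\<close> assms(2)
    by (subst card_Un_disjoint[symmetric]) (auto intro: arg_cong[where f = card])
  moreover note lyresplit_split_parts_disjoint[OF split.hyps(6,7)]
  ultimately show ?case by (simp add: sum.union_disjoint add_divide_distrib)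
qed

lemma lyresplit_sum_card_hatRset_bound:
  assumes "lyresplit \<delta> E par v0 Vs k P L" and "0 < \<delta>" and "finite E" and "finite Vs"
    and "\<forall>v\<in>Vs. \<exists>n. (par ^^ n) v = v0"
  shows "(\<Sum>B\<in>P. real (card (hatRset E par v0 B)))
           \<le> real (card (hatRset E par v0 Vs)) * (1 + \<delta>) ^ (L - k)"
  using assms(1,4,5)
proof (induction rule: lyresplit.induct)
  case (leaf Vs k)
  then show ?case by simp
next
  case (split Vs c k P1 L1 P2 L2)
  let ?S = "subtree_below par c Vs" and ?h = "\<lambda>X. real (card (hatRset E par v0 X))"
  let ?q = "(1 + \<delta>) ^ (max L1 L2 - Suc k)"
  have "?S \<subseteq> Vs" unfolding subtree_below_def by blast
  then have "finite ?S" using split.prems(1) by (rule finite_subset)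
  have "sum ?h P1 \<le> ?h ?S * (1 + \<delta>) ^ (L1 - Suc k)"
    using split.IH(1) \<open>finite ?S\<close> \<open>?S \<subseteq> Vs\<close> split.prems(2) by blast
  also have "\<dots> \<le> ?h ?S * ?q"
    using assms(2) by (intro mult_left_mono power_increasing) auto
  finally have sum1: "sum ?h P1 \<le> ?h ?S * ?q" .
  have "sum ?h P2 \<le> ?h (Vs - ?S) * (1 + \<delta>) ^ (L2 - Suc k)"
    using split.IH(2) split.prems by simp
  also have "\<dots> \<le> ?h (Vs - ?S) * ?q"
    using assms(2) by (intro mult_left_mono power_increasing) auto
  finally have sum2: "sum ?h P2 \<le> ?h (Vs - ?S) * ?q" .
  have "?h ?S + ?h (Vs - ?S) \<le> ?h Vs + real (card (hatRv E par v0 (par c) \<inter> hatRv E par v0 c))"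
    using card_hatRset_subtree_split[OF assms(3) split.prems, of c] by linarith
  then have parts: "?h ?S + ?h (Vs - ?S) \<le> (1 + \<delta>) * ?h Vs"
    using split.hyps(5) by (simp add: algebra_simps)
  have "Suc k \<le> L1" using lyresplit_partition[OF split.hyps(6)] by simp
  then have q: "(1 + \<delta>) ^ (max L1 L2 - k) = (1 + \<delta>) * ?q"
    by (simp add: Suc_diff_Suc[symmetric])
  note disj = lyresplit_split_parts_disjoint[OF split.hyps(6,7)]
  have "sum ?h (P1 \<union> P2) = sum ?h P1 + sum ?h P2" by (simp add: disj sum.union_disjoint)
  also have "\<dots> \<le> (?h ?S + ?h (Vs - ?S)) * ?q" using sum1 sum2 by (simp add: distrib_right)
  also have "\<dots> \<le> (1 + \<delta>) * ?h Vs * ?q" using parts assms(2) by (intro mult_right_mono) simp_all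
  finally show ?case unfolding q by (simp add: mult_ac)
qed

lemma storage_cost_le_sum_card_hatRset:
  assumes "finite E" and "\<forall>B\<in>P. finite B"
  shows "real (storage_cost E P) \<le> (\<Sum>B\<in>P. real (card (hatRset E par v0 B)))"
  unfolding storage_cost_def of_nat_sum
  using assms by (intro sum_mono) (simp add: card_block_recs_le_card_hatRset)

lemma lyresplit_storage_cost_bound:
  assumes "lyresplit \<delta> E par v0 Vs k P L" and "0 < \<delta>" and "finite E" and "finite Vs"
    and "\<forall>v\<in>Vs. \<exists>n. (par ^^ n) v = v0"
  shows "real (storage_cost E P) \<le> real (card (hatRset E par v0 Vs)) * (1 + \<delta>) ^ (L - k)"
proof -
  have "\<forall>B\<in>P. B \<subseteq> Vs" using lyresplit_partition[OF assms(1)] by blast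
  then have "\<forall>B\<in>P. finite B" using assms(4) by (blast intro: finite_subset)
  then have "real (storage_cost E P) \<le> (\<Sum>B\<in>P. real (card (hatRset E par v0 B)))"
    by (rule storage_cost_le_sum_card_hatRset[OF assms(3)])
  also have "\<dots> \<le> real (card (hatRset E par v0 Vs)) * (1 + \<delta>) ^ (L - k)"
    using lyresplit_sum_card_hatRset_bound[OF assms] .
  finally show ?thesis .
qed

lemma card_hatRset_eq_card_add_card_hatR:
  assumes "finite E" and "finite V" and "fst ` E \<subseteq> V"
  shows "card (hatRset E par v0 V) = card (snd ` E) + card_hatR E par v0 V"
proof -
  have "card (snd ` E) \<le> card (hatRset E par v0 V)"
    using card_block_recs_le_card_hatRset[OF assms(1,2)] block_recs_eq_snd_image[OF assms(3)]
    by metis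
  then show ?thesis unfolding card_hatR_def by simp
qed

lemma lyresplit_avg_checkout_cost_bound:
  assumes "lyresplit \<delta> E par v0 V k P L" and "finite E" and "finite V" and "fst ` E \<subseteq> V"
  shows "avg_checkout_cost E V P \<le> (1 / \<delta>) * (real (card E) / real (card V))"
proof -
  have "{e \<in> E. fst e \<in> V} = E" using assms(4) by blast
  then have "edges_in E V = card E" unfolding edges_in_def by simp
  then have "avg_checkout_cost E V P \<le> real (card E) / \<delta> / real (card V)"
    unfolding avg_checkout_cost_def
    using lyresplit_checkout_bound[OF assms(1-3)] by (intro divide_right_mono) simp_all
  then show ?thesis by simp
qed

theorem theorem3:
  fixes V :: "'v set" and E :: "('v \<times> 'r) set" and GE :: "('v \<times> 'v) set"
    and v0 :: 'v and par :: "'v \<Rightarrow> 'v" and \<delta> :: real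
    and P :: "'v set set" and lvl :: nat
  assumes finV: "finite V" and finE: "finite E" and EV: "fst ` E \<subseteq> V"
    and GEV: "GE \<subseteq> V \<times> V" and dag: "acyclic GE"
    and root: "v0 \<in> V" "\<forall>v\<in>V. (v \<noteq> v0) \<longleftrightarrow> (\<exists>u. (u, v) \<in> GE)"
    and par_edge: "\<forall>v\<in>V. v \<noteq> v0 \<longrightarrow> (par v, v) \<in> GE"
    and par_max: "\<forall>v\<in>V. v \<noteq> v0 \<longrightarrow> (\<forall>u. (u, v) \<in> GE \<longrightarrow> wt E u v \<le> wt E (par v) v)"
    and delta: "0 < \<delta>" "\<delta> \<le> 1"
    and run: "lyresplit \<delta> E par v0 V 0 P lvl"
  shows "\<Union>P = V \<and> (\<forall>B\<in>P. B \<noteq> {}) \<and> pairwise disjnt P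
    \<and> real (storage_cost E P)
        \<le> (real (card (snd ` E)) + real (card_hatR E par v0 V)) / real (card (snd ` E))
            * (1 + \<delta>) ^ lvl * real (card (snd ` E))
    \<and> avg_checkout_cost E V P \<le> (1 / \<delta>) * (real (card E) / real (card V))"
proof -
  have "wf GE" using finite_acyclic_wf[OF finite_subset[OF GEV] dag] finV by blast
  then have reach: "\<forall>v\<in>V. \<exists>n. (par ^^ n) v = v0"
    using funpow_reaches_root[of GE V v0 par] par_edge GEV by blast
  have storage: "real (storage_cost E P)
      \<le> (real (card (snd ` E)) + real (card_hatR E par v0 V)) / real (card (snd ` E))
          * (1 + \<delta>) ^ lvl * real (card (snd ` E))"
  proof (cases "E = {}")
    case True
    then show ?thesis unfolding storage_cost_def block_recs_def Rv_def by simp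
  next
    case False
    then show ?thesis
      using lyresplit_storage_cost_bound[OF run delta(1) finE finV reach]
        card_hatRset_eq_card_add_card_hatR[OF finE finV EV, of par v0] finE
      by simp
  qed
  then show ?thesis
    using lyresplit_partition[OF run] lyresplit_avg_checkout_cost_bound[OF run finE finV EV]
    by blast
qed

end
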